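(* Let $\Omega_n=\dfrac{\pi^{n/2}}{\Gamma\left(\frac n2+1\right)}$ for $n\in\mathbb{N}_0$. As $n\to\infty$, the following asymptotic series holds: \[ \frac{\Omega_{n-1}}{\Omega_n}=\sqrt{\frac{n}{2\pi}}\left\{\sum_{j=0}^\infty\frac{c_j}{n^j}\right\}, \] where $c_0=1$ and, for $j\in\mathbb{N}$, \[ c_j=\frac1j\sum_{k=1}^j(-1)^k\left[B_{k+1}\left(\tfrac12\right)-B_{k+1}(1)\right]\frac{2^k}{k+1}c_{j-k}, \] $B_m(x)$ denoting the Bernoulli polynomials.
   Context: $\Omega_n$ is the volume of the unit ball in $\mathbb{R}^n$; $\Gamma$ is Euler's gamma function. The Bernoulli polynomials are defined by $\frac{te^{xt}}{e^t-1}=\sum_{m\ge0}B_m(x)\frac{t^m}{m!}$. The series equality is an asymptotic expansion: for every $N$, $\frac{\Omega_{n-1}}{\Omega_n}\sqrt{\frac{2\pi}{n}}-\sum_{j=0}^Nc_jn^{-j}=O(n^{-N-1})$ as $n\to\infty$. *)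

theory Defs
  imports "HOL-Analysis.Analysis" "HOL-Computational_Algebra.Formal_Power_Series"
          "HOL-Library.Landau_Symbols"
begin

definition Omega :: "nat \<Rightarrow> real" where
  "Omega n = pi powr (real n / 2) / Gamma (real n / 2 + 1)"

text \<open>Bernoulli polynomials via the exponential generating function
  t e^{xt} / (e^t - 1) = sum_m B_m(x) t^m / m!  (as a formal power series).\<close>
definition bernpoly :: "nat \<Rightarrow> real \<Rightarrow> real" where
  "bernpoly m x = fact m * fps_nth ((fps_X * fps_exp x) div (fps_exp 1 - 1)) m"

function cc :: "nat \<Rightarrow> real" where
  "cc 0 = 1"
| "cc (Suc j) = (1 / real (Suc j)) *
     (\<Sum>k\<in>{1..Suc j}. (-1) ^ k * (bernpoly (k + 1) (1/2) - bernpoly (k + 1) 1)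
        * 2 ^ k / real (k + 1) * cc (Suc j - k))"
  by pat_completeness auto
termination
  by (relation "Wellfounded.measure id") auto

end

(*
  Write f(n) = Omega (n - 1) / Omega n * sqrt (2 pi / n) and F = f^2. The functional equation
  of Gamma gives F(n + 2) = w(1/n) F(n) with w(t) = (1 + 2t) / (1 + t)^2, and
  1/(n + 2) = phi(1/n) with phi(t) = t / (1 + 2t); log-convexity of Gamma gives F(n) -> 1.
  The recurrence for c_j says that C = sum_j c_j t^j satisfies C' = C M, where M collects the
  weights of the recurrence; a Bernoulli polynomial identity for these weights makes D = C^2
  satisfy the formal functional equation D(phi(t)) = w(t) D(t), as both sides solve the same
  linear differential equation. Hence the remainder E(n) = F(n) - D_N(1/n) of the degree N
  truncation satisfies E(n + 2) - E(n) = (w(1/n) - 1) E(n) + O(n^(-N-2)); since E(n) -> 0,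
  summing these differences along n, n + 2, n + 4, ... improves E = O(n^(-k)) to
  O(n^(-k-1)), up to k = N + 1. Finally f - C_N = (F - C_N^2) / (f + C_N).
*)

theory Submission
  imports Defs "HOL-Real_Asymp.Real_Asymp" "HOL-Complex_Analysis.Laurent_Convergence"
begin

no_notation vec_nth (infixl \<open>$\<close> 90)
notation fps_nth (infixl \<open>$\<close> 75)

section \<open>Bernoulli polynomials and the weights of the recurrence\<close>

lemma bernpoly_fps_times_denominator:
  fixes x :: real
  shows "(fps_X * fps_exp x) div (fps_exp 1 - 1) * (fps_exp 1 - 1) = fps_X * fps_exp x"
proof (rule fps_times_divide_eq)
  have "(fps_exp (1::real) - 1) $ 1 \<noteq> 0" by simp
  then show "fps_exp (1::real) - 1 \<noteq> 0" by auto
  have "subdegree (fps_exp (1::real) - 1) \<le> 1"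
    by (rule subdegree_leI) simp
  also have "1 \<le> subdegree (fps_X * fps_exp x)"
    by (rule subdegree_geI) auto
  finally show "subdegree (fps_exp (1::real) - 1) \<le> subdegree (fps_X * fps_exp x)" .
qed

lemma sum_binomial_bernpoly:
  assumes "M \<ge> 1"
  shows "(\<Sum>i<M. real (M choose i) * bernpoly i x) = real M * x ^ (M - 1)"
proof -
  define B where "B = (fps_X * fps_exp x) div (fps_exp (1::real) - 1)"
  have "(\<Sum>i<M. B $ i / fact (M - i)) = (\<Sum>i\<le>M. B $ i * (fps_exp 1 - 1) $ (M - i))"
    by (simp add: lessThan_Suc_atMost[symmetric] fps_exp_def divide_inverse)
  also have "\<dots> = (B * (fps_exp 1 - 1)) $ M"
    by (simp only: fps_mult_nth atLeast0AtMost)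
  also have "\<dots> = (fps_X * fps_exp x) $ M"
    by (simp only: B_def bernpoly_fps_times_denominator)
  also have "\<dots> = x ^ (M - 1) / fact (M - 1)"
    using assms by (cases M) (simp_all add: fps_exp_def)
  finally have B_sum: "(\<Sum>i<M. B $ i / fact (M - i)) = x ^ (M - 1) / fact (M - 1)" .
  have "(\<Sum>i<M. real (M choose i) * bernpoly i x) = fact M * (\<Sum>i<M. B $ i / fact (M - i))"
    by (simp add: bernpoly_def B_def[symmetric] sum_distrib_left binomial_fact field_simps)
  also have "\<dots> = real M * x ^ (M - 1)"
    using assms by (simp add: B_sum) (cases M, simp_all add: field_simps)
  finally show ?thesis .
qed

lemma bernpoly_0: "bernpoly 0 x = 1"
  using sum_binomial_bernpoly[of 1 x] by simp

lemma bernpoly_1: "bernpoly 1 x = x - 1/2"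
  using sum_binomial_bernpoly[of 2 x] by (simp add: numeral_2_eq_2 bernpoly_0 lessThan_Suc)

definition cc_weight :: "nat \<Rightarrow> real" where
  "cc_weight k = (-1) ^ k * (bernpoly (k + 1) (1/2) - bernpoly (k + 1) 1) * 2 ^ k / real (k + 1)"

lemma cc_Suc_weight: "cc (Suc j) = (\<Sum>k=1..Suc j. cc_weight k * cc (Suc j - k)) / real (Suc j)"
  by (simp add: cc_weight_def)

lemma cc_weight_times_binomial:
  assumes "i < m"
  shows "cc_weight (Suc i) * (-2) ^ (m - i) * real (Suc m choose Suc i)
    = (-2) ^ Suc m / real (m + 2)
      * (real (m + 2 choose (i + 2)) * (bernpoly (i + 2) (1/2) - bernpoly (i + 2) 1))"
proof -
  define \<beta> where "\<beta> = bernpoly (i + 2) (1/2) - bernpoly (i + 2) 1"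
  define b where "b = real (Suc m choose Suc i)"
  define b' where "b' = real (m + 2 choose (i + 2))"
  have weight: "cc_weight (Suc i) = (-2) ^ Suc i * \<beta> / real (i + 2)"
    by (simp add: cc_weight_def \<beta>_def power_mult_distrib[symmetric])
  have "real (m + 2) * b = b' * real (i + 2)"
    using Suc_times_binomial_eq[of "Suc m" "Suc i"] unfolding b_def b'_def
    by (metis add_2_eq_Suc' of_nat_mult)
  then have binom: "b / real (i + 2) = b' / real (m + 2)"
    by (simp add: field_simps)
  have power: "(-2::real) ^ Suc i * (-2) ^ (m - i) = (-2) ^ Suc m"
    using assms by (simp flip: power_add)
  have "cc_weight (Suc i) * (-2) ^ (m - i) * b = ((-2) ^ Suc i * (-2) ^ (m - i)) * \<beta> * (b / real (i + 2))"
    unfolding weight by (simp add: field_simps)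
  also have "\<dots> = (-2) ^ Suc m / real (m + 2) * (b' * \<beta>)"
    unfolding power binom by (simp add: field_simps)
  finally show ?thesis
    unfolding \<beta>_def b_def b'_def .
qed

lemma sum_cc_weight_binomial:
  "(\<Sum>i<m. cc_weight (Suc i) * (-2) ^ (m - i) * real (Suc m choose Suc i)) = (-2) ^ m - (-1) ^ m"
proof -
  define \<beta> where "\<beta> k = bernpoly k (1/2) - bernpoly k 1" for k
  have "(\<Sum>i<m. real (m + 2 choose (i + 2)) * \<beta> (i + 2))
      = (\<Sum>k<m + 2. real (m + 2 choose k) * \<beta> k) - \<beta> 0 - real (m + 2) * \<beta> 1"
    by (simp add: sum.lessThan_Suc_shift del: sum.lessThan_Suc)
  also have "\<dots> = real (m + 2) * ((1/2) ^ Suc m - 1/2)"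
  proof -
    have sum_binomial_\<beta>: "(\<Sum>k<M. real (M choose k) * \<beta> k) = real M * ((1/2) ^ (M - 1) - 1)"
      if "M \<ge> 1" for M
      using sum_binomial_bernpoly[OF that, of "1/2"] sum_binomial_bernpoly[OF that, of 1]
      by (simp add: \<beta>_def sum_subtractf right_diff_distrib)
    moreover have "\<beta> 0 = 0" "\<beta> 1 = -1/2"
      unfolding \<beta>_def bernpoly_0 bernpoly_1 by simp_all
    ultimately show ?thesis
      using sum_binomial_\<beta>[of "m + 2"] by (simp add: algebra_simps del: sum.lessThan_Suc)
  qed
  finally have sum_\<beta>: "(\<Sum>i<m. real (m + 2 choose (i + 2)) * \<beta> (i + 2))
      = real (m + 2) * ((1/2) ^ Suc m - 1/2)" .
  have "(\<Sum>i<m. cc_weight (Suc i) * (-2) ^ (m - i) * real (Suc m choose Suc i))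
      = (-2) ^ Suc m / real (m + 2) * (\<Sum>i<m. real (m + 2 choose (i + 2)) * \<beta> (i + 2))"
    by (simp add: cc_weight_times_binomial \<beta>_def sum_distrib_left del: binomial_Suc_Suc)
  also have "\<dots> = (-2) ^ Suc m * ((1/2) ^ Suc m - 1/2)"
    unfolding sum_\<beta> by simp
  also have "\<dots> = (-2) ^ m - (-1) ^ m"
    by (simp add: right_diff_distrib flip: power_mult_distrib)
  finally show ?thesis .
qed

section \<open>Formal power series\<close>

lemma fps_inverse_one_plus_const_X_power_nth:
  fixes c :: "'a::field_char_0"
  shows "(inverse (1 + fps_const c * fps_X) ^ Suc p) $ j = of_nat (p + j choose j) * (- c) ^ j"
proof -
  have "1 - fps_const (- c) * fps_X = 1 + fps_const c * fps_X"
    by (simp flip: fps_const_neg)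
  then have "inverse (1 + fps_const c * fps_X) ^ Suc p = inverse ((1 - fps_const (- c) * fps_X) ^ Suc p)"
    by (simp only: fps_inverse_power)
  also have "\<dots> = Abs_fps (\<lambda>k. of_nat (p + k choose k) * (- c) ^ k)"
    by (subst one_minus_const_fps_X_neg_power') simp_all
  finally show ?thesis
    by simp
qed

lemma fps_power_eq_X_power_times_shift:
  fixes b :: "'a::comm_ring_1 fps"
  assumes "b $ 0 = 0"
  shows "b ^ n = fps_X ^ n * fps_shift 1 b ^ n"
proof -
  have "b = fps_X * fps_shift 1 b"
    using assms by (intro fps_ext) simp
  then show ?thesis
    by (metis power_mult_distrib)
qed

lemma fps_power_nth_below:
  fixes b :: "'a::comm_ring_1 fps"
  assumes "b $ 0 = 0" "s < n"
  shows "(b ^ n) $ s = 0"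
  using assms by (simp add: fps_power_eq_X_power_times_shift[OF assms(1)] fps_X_power_mult_nth)

lemma fps_power_nth_diagonal:
  fixes b :: "'a::comm_ring_1 fps"
  assumes "b $ 0 = 0"
  shows "(b ^ n) $ n = (b $ 1) ^ n"
  by (simp add: fps_power_eq_X_power_times_shift[OF assms] fps_X_power_mult_nth fps_power_zeroth)

lemma fps_compose_mult_nth:
  fixes a b h :: "'a::comm_ring_1 fps"
  assumes "b $ 0 = 0"
  shows "((a oo b) * h) $ m = (\<Sum>i\<le>m. a $ i * (b ^ i * h) $ m)"
proof -
  have "((a oo b) * h) $ m = (\<Sum>s\<le>m. (\<Sum>i\<le>s. a $ i * (b ^ i) $ s) * h $ (m - s))"
    by (simp add: fps_mult_nth fps_compose_nth atLeast0AtMost)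
  also have "\<dots> = (\<Sum>s\<le>m. \<Sum>i\<le>m. a $ i * (b ^ i) $ s * h $ (m - s))"
  proof (intro sum.cong refl)
    fix s assume "s \<in> {..m}"
    then have "(\<Sum>i\<le>m. a $ i * (b ^ i) $ s * h $ (m - s)) = (\<Sum>i\<le>s. a $ i * (b ^ i) $ s * h $ (m - s))"
      by (intro sum.mono_neutral_right) (auto simp: fps_power_nth_below[OF assms])
    then show "(\<Sum>i\<le>s. a $ i * (b ^ i) $ s) * h $ (m - s) = (\<Sum>i\<le>m. a $ i * (b ^ i) $ s * h $ (m - s))"
      by (simp add: sum_distrib_right)
  qed
  also have "\<dots> = (\<Sum>i\<le>m. a $ i * (b ^ i * h) $ m)"
    by (subst sum.swap) (simp add: fps_mult_nth atLeast0AtMost sum_distrib_left mult.assoc)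
  finally show ?thesis .
qed

lemma fps_linear_ode_unique:
  fixes A B K :: "'a::field_char_0 fps"
  assumes "fps_deriv A = A * K" "fps_deriv B = B * K" "A $ 0 = B $ 0"
  shows "A = B"
proof -
  have "\<forall>j\<le>n. A $ j = B $ j" for n
  proof (induction n)
    case 0
    then show ?case using assms(3) by simp
  next
    case (Suc n)
    have "of_nat (Suc n) * A $ Suc n = (A * K) $ n"
      by (simp flip: assms(1))
    also have "\<dots> = (B * K) $ n"
      using Suc.IH by (auto simp: fps_mult_nth intro!: sum.cong)
    also have "\<dots> = of_nat (Suc n) * B $ Suc n"
      by (simp flip: assms(2))
    finally have "A $ Suc n = B $ Suc n"
      by (simp del: of_nat_Suc)
    then show ?case
      using Suc.IH le_Suc_eq by auto
  qed
  then show ?thesis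
    by (intro fps_ext) auto
qed

section \<open>The formal functional equation\<close>

definition cc_fps :: "real fps" where
  "cc_fps = Abs_fps cc"

definition cc_log_deriv :: "real fps" where
  "cc_log_deriv = Abs_fps (\<lambda>i. cc_weight (Suc i))"

definition step_fps :: "real fps" where
  "step_fps = fps_X * inverse (1 + 2 * fps_X)"

definition ratio_fps :: "real fps" where
  "ratio_fps = (1 + 2 * fps_X) * inverse (1 + fps_X) ^ 2"

lemma fps_deriv_cc_fps: "fps_deriv cc_fps = cc_fps * cc_log_deriv"
proof (rule fps_ext)
  fix n
  have "fps_deriv cc_fps $ n = real (Suc n) * cc (Suc n)"
    by (simp add: cc_fps_def)
  also have "\<dots> = (\<Sum>k=1..Suc n. cc_weight k * cc (Suc n - k))"
    by (subst cc_Suc_weight) simp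
  also have "\<dots> = (\<Sum>i=0..n. cc i * cc_weight (Suc (n - i)))"
    by (rule sum.reindex_bij_witness[of _ "\<lambda>i. Suc n - i" "\<lambda>k. Suc n - k"]) auto
  also have "\<dots> = (cc_fps * cc_log_deriv) $ n"
    by (simp add: fps_mult_nth cc_fps_def cc_log_deriv_def)
  finally show "fps_deriv cc_fps $ n = (cc_fps * cc_log_deriv) $ n" .
qed

lemma inverse_one_plus_2X_power_nth:
  "(inverse (1 + 2 * fps_X) ^ Suc p) $ j = real (p + j choose j) * (-2) ^ j"
  using fps_inverse_one_plus_const_X_power_nth[of "2::real" p j] by (simp add: numeral_fps_const)

lemma inverse_one_plus_2X_nth: "inverse (1 + 2 * fps_X) $ j = (-2::real) ^ j"
  using inverse_one_plus_2X_power_nth[of 0 j] by simp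

lemma inverse_one_plus_2X_deriv:
  "fps_deriv (inverse (1 + 2 * fps_X)) = - 2 * inverse (1 + 2 * fps_X :: real fps) ^ 2"
  by (simp add: fps_inverse_deriv)

lemma inverse_one_plus_X_deriv:
  "fps_deriv (inverse (1 + fps_X)) = - (inverse (1 + fps_X :: real fps) ^ 2)"
  by (simp add: fps_inverse_deriv)

lemma one_plus_2X_times_inverse: "(1 + 2 * fps_X) * inverse (1 + 2 * fps_X :: real fps) = 1"
  by (rule inverse_mult_eq_1') simp

lemma step_fps_nth_0 [simp]: "step_fps $ 0 = 0"
  by (simp add: step_fps_def)

lemma step_fps_nth_1: "step_fps $ 1 = 1"
  by (simp add: step_fps_def inverse_one_plus_2X_nth)

lemma ratio_fps_nth_0: "ratio_fps $ 0 = 1"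
  by (simp add: ratio_fps_def fps_power_zeroth)

lemma fps_deriv_step_fps: "fps_deriv step_fps = inverse (1 + 2 * fps_X) ^ 2"
proof -
  let ?Y = "inverse (1 + 2 * fps_X :: real fps)"
  have "fps_deriv step_fps = ?Y - 2 * fps_X * ?Y ^ 2"
    unfolding step_fps_def fps_deriv_mult inverse_one_plus_2X_deriv by (simp add: algebra_simps)
  also have "\<dots> = ((1 + 2 * fps_X) * ?Y) * ?Y - 2 * fps_X * ?Y ^ 2"
    by (simp only: one_plus_2X_times_inverse mult_1_left)
  also have "\<dots> = ?Y ^ 2"
    by (simp add: algebra_simps power2_eq_square)
  finally show ?thesis .
qed

lemma cc_log_deriv_compose_step:
  "(cc_log_deriv oo step_fps) * fps_deriv step_fps
     = cc_log_deriv + inverse (1 + 2 * fps_X) - inverse (1 + fps_X)"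
proof (rule fps_ext)
  fix m
  let ?Y = "inverse (1 + 2 * fps_X :: real fps)"
  have "(step_fps ^ i * ?Y ^ 2) $ m = (-2) ^ (m - i) * real (Suc m choose Suc i)" if "i \<le> m" for i
  proof -
    have "step_fps ^ i * ?Y ^ 2 = fps_X ^ i * (?Y ^ i * ?Y ^ 2)"
      by (simp add: step_fps_def power_mult_distrib mult.assoc)
    also have "?Y ^ i * ?Y ^ 2 = ?Y ^ Suc (Suc i)"
      by (metis power_add add_2_eq_Suc')
    finally have "step_fps ^ i * ?Y ^ 2 = fps_X ^ i * ?Y ^ Suc (Suc i)" .
    then have "(step_fps ^ i * ?Y ^ 2) $ m = real (Suc i + (m - i) choose (m - i)) * (-2) ^ (m - i)"
      using that by (simp add: fps_X_power_mult_nth inverse_one_plus_2X_power_nth del: power_Suc)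
    also have "Suc i + (m - i) choose (m - i) = Suc m choose Suc i"
      using that binomial_symmetric[of "Suc i" "Suc m"] by simp
    finally show ?thesis
      by simp
  qed
  then have "((cc_log_deriv oo step_fps) * fps_deriv step_fps) $ m
      = (\<Sum>i\<le>m. cc_weight (Suc i) * ((-2) ^ (m - i) * real (Suc m choose Suc i)))"
    by (simp add: fps_compose_mult_nth fps_deriv_step_fps cc_log_deriv_def)
  also have "\<dots> = (\<Sum>i<m. cc_weight (Suc i) * (-2) ^ (m - i) * real (Suc m choose Suc i))
      + cc_weight (Suc m)"
    by (simp add: lessThan_Suc_atMost[symmetric] mult.assoc)
  also have "\<dots> = (cc_log_deriv + ?Y - inverse (1 + fps_X)) $ m"
    by (simp add: sum_cc_weight_binomial cc_log_deriv_def inverse_one_plus_2X_nth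
        fps_inverse_fps_X_plus1 del: binomial_Suc_Suc)
  finally show "((cc_log_deriv oo step_fps) * fps_deriv step_fps) $ m
      = (cc_log_deriv + ?Y - inverse (1 + fps_X)) $ m" .
qed

lemma fps_deriv_ratio_fps:
  "fps_deriv ratio_fps = ratio_fps * (2 * (inverse (1 + 2 * fps_X) - inverse (1 + fps_X)))"
proof -
  let ?Y = "inverse (1 + 2 * fps_X :: real fps)"
  let ?V = "inverse (1 + fps_X :: real fps)"
  have "fps_deriv ratio_fps = 2 * ?V ^ 2 - 2 * (1 + 2 * fps_X) * ?V ^ 3"
    unfolding ratio_fps_def fps_deriv_mult fps_deriv_power inverse_one_plus_X_deriv
    by (simp add: algebra_simps power2_eq_square power3_eq_cube flip: numeral_fps_const)
  also have "\<dots> = 2 * ?V ^ 2 * ((1 + 2 * fps_X) * ?Y) - 2 * (1 + 2 * fps_X) * ?V ^ 3"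
    by (simp only: one_plus_2X_times_inverse mult_1_right)
  also have "\<dots> = ratio_fps * (2 * (?Y - ?V))"
    by (simp add: ratio_fps_def algebra_simps power2_eq_square power3_eq_cube)
  finally show ?thesis .
qed

lemma cc_fps_sq_compose_step: "cc_fps ^ 2 oo step_fps = ratio_fps * cc_fps ^ 2"
proof (rule fps_linear_ode_unique)
  let ?K = "2 * (cc_log_deriv + inverse (1 + 2 * fps_X) - inverse (1 + fps_X))"
  have "fps_deriv (cc_fps ^ 2 oo step_fps)
      = ((2 * cc_fps ^ 2 * cc_log_deriv) oo step_fps) * fps_deriv step_fps"
    by (simp add: fps_compose_deriv fps_deriv_cc_fps power2_eq_square algebra_simps)
  also have "\<dots> = (cc_fps ^ 2 oo step_fps) * (2 * ((cc_log_deriv oo step_fps) * fps_deriv step_fps))"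
    by (simp add: fps_compose_mult_distrib fps_compose_power algebra_simps)
  finally show "fps_deriv (cc_fps ^ 2 oo step_fps) = (cc_fps ^ 2 oo step_fps) * ?K"
    by (simp only: cc_log_deriv_compose_step)
  show "fps_deriv (ratio_fps * cc_fps ^ 2) = ratio_fps * cc_fps ^ 2 * ?K"
    by (simp add: fps_deriv_ratio_fps fps_deriv_cc_fps power2_eq_square algebra_simps)
  show "(cc_fps ^ 2 oo step_fps) $ 0 = (ratio_fps * cc_fps ^ 2) $ 0"
    by (simp add: ratio_fps_nth_0)
qed

section \<open>Truncations and asymptotics at 1/n\<close>

definition fps_trunc :: "nat \<Rightarrow> 'a::comm_ring_1 fps \<Rightarrow> 'a fps" where
  "fps_trunc N A = (\<Sum>j\<le>N. fps_const (A $ j) * fps_X ^ j)"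

lemma fps_trunc_nth: "fps_trunc N A $ m = (if m \<le> N then A $ m else 0)"
  by (simp add: fps_trunc_def fps_sum_nth fps_X_power_nth if_distrib sum.delta cong: if_cong)

lemma fps_trunc_compose:
  fixes b :: "'a::idom fps"
  assumes "b $ 0 = 0"
  shows "fps_trunc N A oo b = (\<Sum>j\<le>N. fps_const (A $ j) * b ^ j)"
  using assms
  by (simp add: fps_trunc_def fps_compose_sum_distrib fps_compose_mult_distrib fps_X_power_compose)

lemma fps_trunc_functional_eq_nth:
  fixes A b w :: "'a::idom fps"
  assumes eq: "A oo b = w * A" and b: "b $ 0 = 0" "b $ 1 = 1" and w: "w $ 0 = 1"
    and m: "m \<le> Suc N"
  shows "(w * fps_trunc N A - (fps_trunc N A oo b)) $ m = 0"
proof -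
  define T where "T = A - fps_trunc N A"
  have T_low: "T $ i = 0" if "i \<le> N" for i
    using that by (simp add: T_def fps_trunc_nth)
  have "(w * T) $ m = (\<Sum>i\<in>{0}. w $ i * T $ (m - i))"
    unfolding fps_mult_nth using m T_low by (intro sum.mono_neutral_right) auto
  then have wT: "(w * T) $ m = T $ m"
    using w by simp
  have "(T oo b) $ m = (\<Sum>j\<in>{m}. T $ j * (b ^ j) $ m)"
    unfolding fps_compose_nth using m T_low by (intro sum.mono_neutral_right) auto
  then have Tb: "(T oo b) $ m = T $ m"
    using b by (simp add: fps_power_nth_diagonal)
  have "w * fps_trunc N A - (fps_trunc N A oo b) = (T oo b) - w * T"
    by (simp add: T_def fps_compose_sub_distrib eq algebra_simps)
  then show ?thesis
    by (simp add: wT Tb)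
qed

lemma has_fps_expansion_fps_trunc:
  "(\<lambda>t. \<Sum>j\<le>N. A $ j * t ^ j) has_fps_expansion fps_trunc N A"
  unfolding fps_trunc_def by (intro fps_expansion_intros)

lemma bigo_at_0_of_fps_expansion:
  fixes h :: "real \<Rightarrow> real"
  assumes h: "h has_fps_expansion H" and low: "\<And>m. m < M \<Longrightarrow> H $ m = 0"
  shows "h \<in> O[at 0](\<lambda>t. t ^ M)"
proof -
  define S where "S = fps_shift M H"
  have H: "H = fps_X ^ M * S"
    by (intro fps_ext) (simp add: S_def fps_X_power_mult_nth low)
  have rad: "fps_conv_radius S > 0"
    using h by (simp add: S_def has_fps_expansion_def)
  have "eventually (\<lambda>t. t \<in> eball 0 (fps_conv_radius S)) (nhds (0::real))"
    using rad by (intro eventually_nhds_in_open) (auto simp: zero_ereal_def)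
  moreover have "eventually (\<lambda>t. eval_fps H t = h t) (nhds 0)"
    using h by (simp add: has_fps_expansion_def)
  ultimately have "eventually (\<lambda>t. h t = t ^ M * eval_fps S t) (nhds 0)"
  proof eventually_elim
    case (elim t)
    then show ?case
      by (simp add: H eval_fps_mult flip: elim(2))
  qed
  then have quotient: "eventually (\<lambda>t. h t / t ^ M = eval_fps S t) (at 0)"
    unfolding eventually_at_filter by eventually_elim auto
  have "(eval_fps S \<longlongrightarrow> eval_fps S 0) (at 0)"
    using rad by (intro isCont_tendsto_compose[OF continuous_eval_fps]) (auto simp: zero_ereal_def)
  then have "((\<lambda>t. h t / t ^ M) \<longlongrightarrow> eval_fps S 0) (at 0)"
    by (rule tendsto_cong[OF quotient, THEN iffD2])
  then show ?thesis
    by (rule bigoI_tendsto) (unfold eventually_at_filter, simp)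
qed

lemma bigo_inverse_nat_of_fps_expansion:
  fixes h :: "real \<Rightarrow> real"
  assumes "h has_fps_expansion H" and "\<And>m. m < M \<Longrightarrow> H $ m = 0"
  shows "(\<lambda>n::nat. h (1 / real n)) \<in> O(\<lambda>n. 1 / real n ^ M)"
proof -
  have "filterlim (\<lambda>n::nat. 1 / real n) (at_right 0) sequentially"
    by real_asymp
  then have "filterlim (\<lambda>n::nat. 1 / real n) (at 0) sequentially"
    by (rule filterlim_mono[OF _ at_within_le_at order_refl])
  from landau_o.big.compose[OF bigo_at_0_of_fps_expansion[OF assms] this] show ?thesis
    by (simp add: power_one_over)
qed

section \<open>The Gamma function and ratios of ball volumes\<close>

lemma Gamma_midpoint_sq_le:
  fixes a b :: real
  assumes "a > 0" "b > 0"
  shows "Gamma ((a + b) / 2) ^ 2 \<le> Gamma a * Gamma b"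
proof -
  have "(ln \<circ> Gamma) ((1 - 1/2) *\<^sub>R a + (1/2) *\<^sub>R b) \<le> (1 - 1/2) * (ln \<circ> Gamma) a + (1/2) * (ln \<circ> Gamma) b"
    using assms by (intro convex_onD[OF log_convex_Gamma_real]) auto
  then have "2 * ln (Gamma ((a + b) / 2)) \<le> ln (Gamma a) + ln (Gamma b)"
    by (simp add: field_simps)
  moreover have "Gamma ((a + b) / 2) > 0" "Gamma a > 0" "Gamma b > 0"
    using assms by simp_all
  ultimately show ?thesis
    by (simp add: ln_mult ln_realpow flip: ln_le_cancel_iff)
qed

lemma Gamma_plus1_pos: "x > 0 \<Longrightarrow> Gamma (x + 1) = x * Gamma (x::real)"
  by (rule Gamma_plus1) (auto dest: nonpos_Ints_nonpos)

definition gamma_ratio :: "real \<Rightarrow> real" where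
  "gamma_ratio x = Gamma (x + 1) / (Gamma (x + 1/2) * sqrt x)"

lemma gamma_ratio_pos: "x > 0 \<Longrightarrow> gamma_ratio x > 0"
  by (simp add: gamma_ratio_def)

lemma gamma_ratio_sq:
  "x > 0 \<Longrightarrow> gamma_ratio x ^ 2 = Gamma (x + 1) ^ 2 / (Gamma (x + 1/2) ^ 2 * x)"
  by (simp add: gamma_ratio_def power_mult_distrib power_divide)

lemma gamma_ratio_plus_1_sq:
  assumes x: "x > 0"
  shows "gamma_ratio (x + 1) ^ 2 = gamma_ratio x ^ 2 * (x * (x + 1) / (x + 1/2) ^ 2)"
proof -
  have rec1: "Gamma (x + 1 + 1) = (x + 1) * Gamma (x + 1)"
    using x by (intro Gamma_plus1_pos) simp
  have rec2: "Gamma (x + 1 + 1/2) = (x + 1/2) * Gamma (x + 1/2)"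
    using Gamma_plus1_pos[of "x + 1/2"] x by (simp add: add_ac)
  have alg: "((x + 1) * A) ^ 2 / (((x + 1/2) * B) ^ 2 * (x + 1))
      = A ^ 2 / (B ^ 2 * x) * (x * (x + 1) / (x + 1/2) ^ 2)" if "B > 0" for A B :: real
    using x that by (simp add: divide_simps) (simp add: algebra_simps power2_eq_square)
  have "gamma_ratio (x + 1) ^ 2 = Gamma (x + 1 + 1) ^ 2 / (Gamma (x + 1 + 1/2) ^ 2 * (x + 1))"
    by (rule gamma_ratio_sq) (use x in simp)
  also have "\<dots> = ((x + 1) * Gamma (x + 1)) ^ 2 / (((x + 1/2) * Gamma (x + 1/2)) ^ 2 * (x + 1))"
    unfolding rec1 rec2 ..
  also have "\<dots> = gamma_ratio x ^ 2 * (x * (x + 1) / (x + 1/2) ^ 2)"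
    unfolding gamma_ratio_sq[OF x] by (rule alg) (use x in simp)
  finally show ?thesis .
qed

lemma gamma_ratio_sq_bounds:
  assumes x: "x > 0"
  shows "1 \<le> gamma_ratio x ^ 2" "gamma_ratio x ^ 2 \<le> (x + 1/2) / x"
proof -
  have Gamma_pos: "Gamma x > 0" "Gamma (x + 1/2) > 0"
    using x by simp_all
  have rec1: "Gamma (x + 1) = x * Gamma x"
    using x by (rule Gamma_plus1_pos)
  have rec2: "Gamma (x + 3/2) = (x + 1/2) * Gamma (x + 1/2)"
    using Gamma_plus1_pos[of "x + 1/2"] x by (simp add: add_ac)
  have mid: "(x + (x + 1)) / 2 = x + 1/2" "((x + 1/2) + (x + 3/2)) / 2 = x + 1"
    by simp_all
  have lower: "Gamma (x + 1/2) ^ 2 \<le> Gamma x * Gamma (x + 1)"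
    using Gamma_midpoint_sq_le[of x "x + 1", unfolded mid] x by simp
  have upper: "Gamma (x + 1) ^ 2 \<le> Gamma (x + 1/2) * Gamma (x + 3/2)"
    using Gamma_midpoint_sq_le[of "x + 1/2" "x + 3/2", unfolded mid] x by simp
  show "1 \<le> gamma_ratio x ^ 2"
    using lower x Gamma_pos unfolding gamma_ratio_sq[OF x] rec1 by (simp add: field_simps power2_eq_square)
  show "gamma_ratio x ^ 2 \<le> (x + 1/2) / x"
    using upper x Gamma_pos unfolding gamma_ratio_sq[OF x] rec2 by (simp add: field_simps power2_eq_square)
qed

lemma gamma_ratio_tendsto: "(gamma_ratio \<longlongrightarrow> 1) at_top"
proof -
  have "((\<lambda>x. gamma_ratio x ^ 2) \<longlongrightarrow> 1) at_top"
  proof (rule tendsto_sandwich[of "\<lambda>_. 1" _ _ "\<lambda>x. (x + 1/2) / x"])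
    show "eventually (\<lambda>x. 1 \<le> gamma_ratio x ^ 2) at_top"
      using eventually_gt_at_top[of 0] by eventually_elim (rule gamma_ratio_sq_bounds)
    show "eventually (\<lambda>x. gamma_ratio x ^ 2 \<le> (x + 1/2) / x) at_top"
      using eventually_gt_at_top[of 0] by eventually_elim (rule gamma_ratio_sq_bounds)
    show "((\<lambda>x::real. (x + 1/2) / x) \<longlongrightarrow> 1) at_top"
      by real_asymp
  qed simp
  then have "((\<lambda>x. sqrt (gamma_ratio x ^ 2)) \<longlongrightarrow> sqrt 1) at_top"
    by (rule tendsto_real_sqrt)
  moreover have "eventually (\<lambda>x. sqrt (gamma_ratio x ^ 2) = gamma_ratio x) at_top"
    using eventually_gt_at_top[of 0] by eventually_elim (simp add: gamma_ratio_pos less_imp_le)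
  ultimately show ?thesis
    by (simp add: Lim_transform_eventually)
qed

definition omega_ratio :: "nat \<Rightarrow> real" where
  "omega_ratio n = Omega (n - 1) / Omega n * sqrt (2 * pi / real n)"

lemma omega_ratio_eq_gamma_ratio:
  assumes "n \<ge> 1"
  shows "omega_ratio n = gamma_ratio (real n / 2)"
proof -
  define x where "x = real n / 2"
  have x: "x > 0"
    using assms by (simp add: x_def)
  have half: "real (n - 1) / 2 = x - 1/2" "x - 1/2 + 1 = x + 1/2"
    using assms by (simp_all add: x_def of_nat_diff diff_divide_distrib)
  have "Omega (n - 1) = pi powr (x - 1/2) / Gamma (x + 1/2)"
    unfolding Omega_def half ..
  also have "pi powr (x - 1/2) = pi powr x / sqrt pi"
    by (simp add: powr_diff powr_half_sqrt)
  finally have Omega_pred: "Omega (n - 1) = pi powr x / sqrt pi / Gamma (x + 1/2)" .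
  have Omega_n: "Omega n = pi powr x / Gamma (x + 1)"
    by (simp add: Omega_def x_def)
  have sqrt_eq: "sqrt (2 * pi / real n) = sqrt pi / sqrt x"
    by (simp add: x_def real_sqrt_divide real_sqrt_mult)
  have "Gamma (x + 1/2) > 0" "Gamma (x + 1) > 0"
    using x by simp_all
  then have "omega_ratio n = gamma_ratio x"
    using x unfolding omega_ratio_def Omega_pred Omega_n sqrt_eq
    by (simp add: gamma_ratio_def field_simps)
  then show ?thesis
    by (simp add: x_def)
qed

lemma omega_ratio_sq_step:
  assumes "n \<ge> 1"
  shows "omega_ratio (n + 2) ^ 2 = real n * (real n + 2) / (real n + 1) ^ 2 * omega_ratio n ^ 2"
proof -
  have "omega_ratio (n + 2) = gamma_ratio (real (n + 2) / 2)"
    by (rule omega_ratio_eq_gamma_ratio) simp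
  also have "real (n + 2) / 2 = real n / 2 + 1"
    by simp
  finally have "omega_ratio (n + 2) ^ 2 = gamma_ratio (real n / 2 + 1) ^ 2"
    by simp
  also have "\<dots> = gamma_ratio (real n / 2) ^ 2 * (real n / 2 * (real n / 2 + 1) / (real n / 2 + 1/2) ^ 2)"
    using assms by (intro gamma_ratio_plus_1_sq) simp
  also have "real n / 2 * (real n / 2 + 1) / (real n / 2 + 1/2) ^ 2 = real n * (real n + 2) / (real n + 1) ^ 2"
    by (simp add: divide_simps)
  finally show ?thesis
    using assms by (simp add: omega_ratio_eq_gamma_ratio)
qed

lemma omega_ratio_tendsto: "omega_ratio \<longlonglongrightarrow> 1"
proof -
  have "filterlim (\<lambda>n::nat. real n / 2) at_top sequentially"
    by real_asymp
  then have "(\<lambda>n. gamma_ratio (real n / 2)) \<longlonglongrightarrow> 1"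
    by (rule filterlim_compose[OF gamma_ratio_tendsto])
  moreover have "eventually (\<lambda>n. gamma_ratio (real n / 2) = omega_ratio n) sequentially"
    using eventually_ge_at_top[of 1] by eventually_elim (simp add: omega_ratio_eq_gamma_ratio)
  ultimately show ?thesis
    by (rule Lim_transform_eventually)
qed

section \<open>Telescoping\<close>

lemma inverse_power_le_telescoping:
  assumes "n \<ge> 1"
  shows "1 / real n ^ (p + 2) \<le> 3/2 * (1 / real n ^ (p + 1) - 1 / real (n + 2) ^ (p + 1))"
proof -
  define x where "x = real n"
  define a where "a = x / (x + 2)"
  have x: "x \<ge> 1"
    using assms by (simp add: x_def)
  have "0 \<le> a" "a \<le> 1"
    using x by (simp_all add: a_def)
  then have "a ^ (p + 1) \<le> a"
    by (simp add: mult_left_le power_le_one)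
  then have "1 / x ^ (p + 1) * (1 - a) \<le> 1 / x ^ (p + 1) * (1 - a ^ (p + 1))"
    using x by (intro mult_left_mono) auto
  also have "\<dots> = 1 / x ^ (p + 1) - 1 / (x + 2) ^ (p + 1)"
    using x by (simp add: a_def power_divide field_simps)
  finally have diff: "2 / (x + 2) / x ^ (p + 1) \<le> 1 / x ^ (p + 1) - 1 / (x + 2) ^ (p + 1)"
    using x by (simp add: a_def field_simps)
  have n2: "real (n + 2) = x + 2"
    by (simp add: x_def)
  have "1 / x ^ (p + 2) = 3/2 * (2 / (3 * x) / x ^ (p + 1))"
    using x by (simp add: field_simps)
  also have "\<dots> \<le> 3/2 * (2 / (x + 2) / x ^ (p + 1))"
    using x by (intro mult_left_mono divide_right_mono divide_left_mono) auto
  also have "\<dots> \<le> 3/2 * (1 / x ^ (p + 1) - 1 / (x + 2) ^ (p + 1))"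
    using diff by simp
  finally show ?thesis
    unfolding x_def[symmetric] n2 .
qed

lemma abs_le_of_tendsto_zero_step2:
  fixes E u :: "nat \<Rightarrow> real"
  assumes lim: "E \<longlonglongrightarrow> 0"
    and step: "\<And>k. k \<ge> n0 \<Longrightarrow> \<bar>E (k + 2) - E k\<bar> \<le> u k - u (k + 2)"
    and nonneg: "\<And>k. u k \<ge> 0" and n: "n \<ge> n0"
  shows "\<bar>E n\<bar> \<le> u n"
proof -
  have telescope: "\<bar>E n - E (n + 2 * M)\<bar> \<le> u n - u (n + 2 * M)" for M
  proof (induction M)
    case (Suc M)
    have "\<bar>E n - E (n + 2 * Suc M)\<bar> \<le> \<bar>E n - E (n + 2 * M)\<bar> + \<bar>E (n + 2 * M + 2) - E (n + 2 * M)\<bar>"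
      by (simp add: algebra_simps)
    also have "\<dots> \<le> (u n - u (n + 2 * M)) + (u (n + 2 * M) - u (n + 2 * M + 2))"
      using Suc step[of "n + 2 * M"] n by (intro add_mono) auto
    finally show ?case
      by (simp add: algebra_simps)
  qed simp
  have "(\<lambda>M. E (n + 2 * M)) \<longlonglongrightarrow> 0"
    using LIMSEQ_subseq_LIMSEQ[OF lim, of "\<lambda>M. n + 2 * M"] by (simp add: strict_mono_def o_def)
  then have "(\<lambda>M. \<bar>E n - E (n + 2 * M)\<bar>) \<longlonglongrightarrow> \<bar>E n - 0\<bar>"
    by (intro tendsto_intros)
  moreover have "\<bar>E n - E (n + 2 * M)\<bar> \<le> u n" for M
    using telescope[of M] nonneg[of "n + 2 * M"] by linarith
  ultimately show ?thesis
    using LIMSEQ_le_const2 by fastforce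
qed

lemma bigo_of_tendsto_zero_step2:
  fixes E :: "nat \<Rightarrow> real"
  assumes lim: "E \<longlonglongrightarrow> 0"
    and diff: "(\<lambda>n. E (n + 2) - E n) \<in> O(\<lambda>n. 1 / real n ^ (p + 2))"
  shows "E \<in> O(\<lambda>n. 1 / real n ^ (p + 1))"
proof -
  obtain c where c: "c > 0"
    and "eventually (\<lambda>n. norm (E (n + 2) - E n) \<le> c * norm (1 / real n ^ (p + 2))) sequentially"
    using diff by (elim landau_o.bigE)
  then obtain n0 where n0: "\<And>n. n \<ge> n0 \<Longrightarrow> \<bar>E (n + 2) - E n\<bar> \<le> c * (1 / real n ^ (p + 2))"
    by (auto simp: eventually_sequentially)
  define u where "u n = 3/2 * c * (1 / real n ^ (p + 1))" for n
  have "\<bar>E (n + 2) - E n\<bar> \<le> u n - u (n + 2)" if "n \<ge> max n0 1" for n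
  proof -
    have "\<bar>E (n + 2) - E n\<bar> \<le> c * (1 / real n ^ (p + 2))"
      using n0 that by simp
    also have "\<dots> \<le> c * (3/2 * (1 / real n ^ (p + 1) - 1 / real (n + 2) ^ (p + 1)))"
      using inverse_power_le_telescoping[of n p] that c by (intro mult_left_mono) auto
    finally show ?thesis
      by (simp add: u_def algebra_simps)
  qed
  then have bound: "\<bar>E n\<bar> \<le> u n" if "n \<ge> max n0 1" for n
    using lim that c by (intro abs_le_of_tendsto_zero_step2[of E "max n0 1" u]) (auto simp: u_def)
  have "eventually (\<lambda>n. norm (E n) \<le> 3/2 * c * norm (1 / real n ^ (p + 1))) sequentially"
    using eventually_ge_at_top[of "max n0 1"] by eventually_elim (use bound in \<open>simp add: u_def\<close>)
  then show ?thesis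
    by (rule bigoI)
qed

lemma bigo_diff_of_bigo_diff_sq:
  fixes a b :: "'a \<Rightarrow> real"
  assumes sq: "(\<lambda>x. a x ^ 2 - b x ^ 2) \<in> O[F](g)"
    and lim: "((\<lambda>x. a x + b x) \<longlongrightarrow> L) F" and "L \<noteq> 0"
  shows "(\<lambda>x. a x - b x) \<in> O[F](g)"
proof -
  have "((\<lambda>x. 1 / (a x + b x) / 1) \<longlongrightarrow> 1 / L) F"
    using tendsto_divide[OF tendsto_const lim, of 1] \<open>L \<noteq> 0\<close> by simp
  then have "(\<lambda>x. 1 / (a x + b x)) \<in> O[F](\<lambda>_. 1)"
    by (rule bigoI_tendsto) simp
  from landau_o.big.mult[OF sq this]
  have "(\<lambda>x. (a x ^ 2 - b x ^ 2) * (1 / (a x + b x))) \<in> O[F](g)"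
    by simp
  moreover have "eventually (\<lambda>x. a x + b x \<noteq> 0) F"
    using tendsto_imp_eventually_ne[OF lim \<open>L \<noteq> 0\<close>] .
  then have "eventually (\<lambda>x. (a x ^ 2 - b x ^ 2) * (1 / (a x + b x)) = a x - b x) F"
    by eventually_elim (simp add: power2_eq_square square_diff_square_factored)
  ultimately show ?thesis
    by (rule landau_o.big.in_cong[THEN iffD1, rotated])
qed

section \<open>Bootstrapping the expansion\<close>

definition step_fun :: "real \<Rightarrow> real" where
  "step_fun t = t * inverse (1 + 2 * t)"

definition ratio_fun :: "real \<Rightarrow> real" where
  "ratio_fun t = (1 + 2 * t) * inverse (1 + t) ^ 2"

lemma has_fps_expansion_step_fun: "step_fun has_fps_expansion step_fps"
proof -
  have "(\<lambda>t::real. t * inverse (1 + 2 * t)) has_fps_expansion fps_X * inverse (1 + fps_const 2 * fps_X)"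
    by (intro fps_expansion_intros) simp
  then show ?thesis
    unfolding step_fun_def[abs_def] step_fps_def by (simp add: numeral_fps_const)
qed

lemma has_fps_expansion_ratio_fun: "ratio_fun has_fps_expansion ratio_fps"
proof -
  have "(\<lambda>t::real. (1 + 2 * t) * inverse (1 + t) ^ 2)
      has_fps_expansion (1 + fps_const 2 * fps_X) * inverse (1 + fps_X) ^ 2"
    by (intro fps_expansion_intros) simp
  then show ?thesis
    unfolding ratio_fun_def[abs_def] ratio_fps_def by (simp add: numeral_fps_const)
qed

lemma step_fun_inverse_nat: "n \<ge> 1 \<Longrightarrow> step_fun (1 / real n) = 1 / real (n + 2)"
  by (simp add: step_fun_def field_simps)

lemma ratio_fun_inverse_nat:
  "n \<ge> 1 \<Longrightarrow> ratio_fun (1 / real n) = real n * (real n + 2) / (real n + 1) ^ 2"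
  by (simp add: ratio_fun_def divide_simps) (simp add: algebra_simps power2_eq_square)

lemma ratio_fun_inverse_nat_bigo: "(\<lambda>n::nat. ratio_fun (1 / real n) - 1) \<in> O(\<lambda>n. 1 / real n ^ 2)"
  unfolding ratio_fun_def by real_asymp

lemma tendsto_poly_inverse_nat: "(\<lambda>n::nat. \<Sum>j\<le>N. a j * (1 / real n) ^ j) \<longlonglongrightarrow> a 0"
proof -
  have "(\<lambda>n::nat. 1 / real n) \<longlonglongrightarrow> 0"
    by real_asymp
  then have "(\<lambda>n::nat. \<Sum>j\<le>N. a j * (1 / real n) ^ j) \<longlonglongrightarrow> (\<Sum>j\<le>N. a j * 0 ^ j)"
    by (intro tendsto_intros)
  also have "(\<Sum>j\<le>N. a j * (0::real) ^ j) = a 0"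
    by (simp add: power_0_left if_distrib sum.delta cong: if_cong)
  finally show ?thesis .
qed

definition cc_sq_poly :: "nat \<Rightarrow> real \<Rightarrow> real" where
  "cc_sq_poly N t = (\<Sum>j\<le>N. (cc_fps ^ 2) $ j * t ^ j)"

lemma cc_sq_poly_functional_bigo:
  "(\<lambda>n::nat. ratio_fun (1 / real n) * cc_sq_poly N (1 / real n) - cc_sq_poly N (step_fun (1 / real n)))
     \<in> O(\<lambda>n. 1 / real n ^ (N + 2))"
proof (rule bigo_inverse_nat_of_fps_expansion)
  let ?D = "cc_fps ^ 2"
  have "(\<lambda>t. ratio_fun t * cc_sq_poly N t - cc_sq_poly N (step_fun t))
      has_fps_expansion ratio_fps * fps_trunc N ?D - (\<Sum>j\<le>N. fps_const (?D $ j) * step_fps ^ j)"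
    unfolding cc_sq_poly_def
    by (intro fps_expansion_intros has_fps_expansion_fps_trunc has_fps_expansion_ratio_fun
        has_fps_expansion_step_fun)
  then show "(\<lambda>t. ratio_fun t * cc_sq_poly N t - cc_sq_poly N (step_fun t))
      has_fps_expansion ratio_fps * fps_trunc N ?D - (fps_trunc N ?D oo step_fps)"
    by (simp add: fps_trunc_compose)
  show "(ratio_fps * fps_trunc N ?D - (fps_trunc N ?D oo step_fps)) $ m = 0" if "m < N + 2" for m
    using that by (intro fps_trunc_functional_eq_nth cc_fps_sq_compose_step step_fps_nth_1
        ratio_fps_nth_0) simp_all
qed

definition omega_sq_remainder :: "nat \<Rightarrow> nat \<Rightarrow> real" where
  "omega_sq_remainder N n = omega_ratio n ^ 2 - cc_sq_poly N (1 / real n)"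

lemma omega_sq_remainder_tendsto: "omega_sq_remainder N \<longlonglongrightarrow> 0"
proof -
  have "(\<lambda>n. omega_ratio n ^ 2 - cc_sq_poly N (1 / real n)) \<longlonglongrightarrow> 1 ^ 2 - (cc_fps ^ 2) $ 0"
    unfolding cc_sq_poly_def by (intro tendsto_intros omega_ratio_tendsto tendsto_poly_inverse_nat)
  then show ?thesis
    by (simp add: omega_sq_remainder_def[abs_def] cc_fps_def fps_power_zeroth)
qed

lemma omega_sq_remainder_step:
  assumes "n \<ge> 1"
  shows "omega_sq_remainder N (n + 2) - omega_sq_remainder N n
    = (ratio_fun (1 / real n) - 1) * omega_sq_remainder N n
      + (ratio_fun (1 / real n) * cc_sq_poly N (1 / real n) - cc_sq_poly N (step_fun (1 / real n)))"
proof -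
  have "omega_ratio (n + 2) ^ 2 = ratio_fun (1 / real n) * omega_ratio n ^ 2"
    using assms by (simp only: omega_ratio_sq_step ratio_fun_inverse_nat)
  moreover have "cc_sq_poly N (1 / real (n + 2)) = cc_sq_poly N (step_fun (1 / real n))"
    using assms by (simp only: step_fun_inverse_nat)
  ultimately show ?thesis
    by (simp add: omega_sq_remainder_def algebra_simps)
qed

lemma omega_sq_remainder_bigo_improve:
  assumes "omega_sq_remainder N \<in> O(\<lambda>n. 1 / real n ^ N)"
  shows "omega_sq_remainder N \<in> O(\<lambda>n. 1 / real n ^ (N + 1))"
proof (rule bigo_of_tendsto_zero_step2[OF omega_sq_remainder_tendsto])
  have "(\<lambda>n. (ratio_fun (1 / real n) - 1) * omega_sq_remainder N n)
      \<in> O(\<lambda>n. 1 / real n ^ 2 * (1 / real n ^ N))"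
    by (intro landau_o.big.mult ratio_fun_inverse_nat_bigo assms)
  also have "(\<lambda>n::nat. 1 / real n ^ 2 * (1 / real n ^ N)) = (\<lambda>n. 1 / real n ^ (N + 2))"
    by (rule ext) (simp only: times_divide_times_eq power_add mult_1_left mult.commute)
  finally have "(\<lambda>n. (ratio_fun (1 / real n) - 1) * omega_sq_remainder N n)
      \<in> O(\<lambda>n. 1 / real n ^ (N + 2))" .
  then have "(\<lambda>n. (ratio_fun (1 / real n) - 1) * omega_sq_remainder N n
      + (ratio_fun (1 / real n) * cc_sq_poly N (1 / real n) - cc_sq_poly N (step_fun (1 / real n))))
      \<in> O(\<lambda>n. 1 / real n ^ (N + 2))"
    by (intro sum_in_bigo cc_sq_poly_functional_bigo)
  moreover have "eventually (\<lambda>n. (ratio_fun (1 / real n) - 1) * omega_sq_remainder N n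
      + (ratio_fun (1 / real n) * cc_sq_poly N (1 / real n) - cc_sq_poly N (step_fun (1 / real n)))
      = omega_sq_remainder N (n + 2) - omega_sq_remainder N n) sequentially"
    using eventually_ge_at_top[of 1] by eventually_elim (rule omega_sq_remainder_step[symmetric])
  ultimately show "(\<lambda>n. omega_sq_remainder N (n + 2) - omega_sq_remainder N n)
      \<in> O(\<lambda>n. 1 / real n ^ (N + 2))"
    by (rule landau_o.big.in_cong[THEN iffD1, rotated])
qed

lemma omega_sq_remainder_bigo: "omega_sq_remainder N \<in> O(\<lambda>n. 1 / real n ^ (N + 1))"
proof (induction N)
  case 0
  have "omega_sq_remainder 0 \<in> O(\<lambda>_. 1)"
    using omega_sq_remainder_tendsto by (intro bigoI_tendsto[where c = 0]) simp_all
  then show ?case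
    by (intro omega_sq_remainder_bigo_improve) simp
next
  case (Suc N)
  have "omega_sq_remainder (Suc N)
      = (\<lambda>n. omega_sq_remainder N n - (cc_fps ^ 2) $ Suc N * (1 / real n) ^ Suc N)"
    by (simp add: fun_eq_iff omega_sq_remainder_def cc_sq_poly_def algebra_simps)
  moreover have "(\<lambda>n. (cc_fps ^ 2) $ Suc N * (1 / real n) ^ Suc N) \<in> O(\<lambda>n. 1 / real n ^ Suc N)"
    by (rule bigoI[where c = "\<bar>(cc_fps ^ 2) $ Suc N\<bar>"]) (simp add: power_one_over abs_mult)
  ultimately have "omega_sq_remainder (Suc N) \<in> O(\<lambda>n. 1 / real n ^ Suc N)"
    using Suc.IH by (simp add: sum_in_bigo)
  then show ?case
    by (rule omega_sq_remainder_bigo_improve)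
qed

lemma cc_sq_poly_minus_sq_bigo:
  "(\<lambda>n::nat. cc_sq_poly N (1 / real n) - (\<Sum>j\<le>N. cc j * (1 / real n) ^ j) ^ 2)
     \<in> O(\<lambda>n. 1 / real n ^ (N + 1))"
proof (rule bigo_inverse_nat_of_fps_expansion)
  have "(\<lambda>t. \<Sum>j\<le>N. cc j * t ^ j) has_fps_expansion fps_trunc N cc_fps"
    using has_fps_expansion_fps_trunc[where A = cc_fps] by (simp add: cc_fps_def)
  then show "(\<lambda>t. cc_sq_poly N t - (\<Sum>j\<le>N. cc j * t ^ j) ^ 2)
      has_fps_expansion fps_trunc N (cc_fps ^ 2) - fps_trunc N cc_fps ^ 2"
    unfolding cc_sq_poly_def by (intro fps_expansion_intros has_fps_expansion_fps_trunc)
  show "(fps_trunc N (cc_fps ^ 2) - fps_trunc N cc_fps ^ 2) $ m = 0" if "m < N + 1" for m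
    using that by (auto simp: power2_eq_square fps_mult_nth fps_trunc_nth intro!: sum.cong)
qed

theorem theorem8:
  fixes N :: nat
  shows "(\<lambda>n::nat. Omega (n - 1) / Omega n * sqrt (2 * pi / real n)
            - (\<Sum>j\<le>N. cc j / real n ^ j))
         \<in> O(\<lambda>n. 1 / real n ^ (N + 1))"
proof -
  define C where "C n = (\<Sum>j\<le>N. cc j * (1 / real n) ^ j)" for n
  have "(\<lambda>n. omega_sq_remainder N n + (cc_sq_poly N (1 / real n) - C n ^ 2))
      \<in> O(\<lambda>n. 1 / real n ^ (N + 1))"
    unfolding C_def by (intro sum_in_bigo omega_sq_remainder_bigo cc_sq_poly_minus_sq_bigo)
  then have "(\<lambda>n. omega_ratio n ^ 2 - C n ^ 2) \<in> O(\<lambda>n. 1 / real n ^ (N + 1))"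
    by (simp add: omega_sq_remainder_def)
  moreover have "(\<lambda>n. omega_ratio n + C n) \<longlonglongrightarrow> 1 + cc 0"
    unfolding C_def by (intro tendsto_intros omega_ratio_tendsto tendsto_poly_inverse_nat)
  ultimately have "(\<lambda>n. omega_ratio n - C n) \<in> O(\<lambda>n. 1 / real n ^ (N + 1))"
    by (rule bigo_diff_of_bigo_diff_sq) simp
  then show ?thesis
    by (simp add: omega_ratio_def C_def power_one_over)
qed

end
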